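(* Let $\Sigma\in\mathbb R^{d\times d}$ be symmetric positive semidefinite with eigenvalues $\lambda_1\ge\dots\ge\lambda_d\ge0$ and corresponding orthonormal eigenvectors $u_1,\dots,u_d$. For each $\ell$ let $u_{\ell,(1)}^2\le\dots\le u_{\ell,(d)}^2$ be the order statistics of $u_{\ell,1}^2,\dots,u_{\ell,d}^2$. Let $\Delta$ be any diagonal matrix with $\Delta\succeq\Sigma$, and let $\Delta_{(1,1)}\le\dots\le\Delta_{(d,d)}$ be the order statistics of its diagonal entries. Then for all $k=1,\dots,d$, $$\Delta_{(k,k)}\ \ge\ b_k(\Sigma):=\max_{\ell\le d}\ \lambda_\ell\sum_{j=1}^k u_{\ell,(j)}^2.$$
   Context: $\succeq$ denotes the positive semidefinite order. *)

theory Defs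
  imports "HOL-Analysis.Analysis" "HOL-Library.Multiset"
begin

definition psd :: "real^'n^'n \<Rightarrow> bool" where
  "psd A \<longleftrightarrow> (\<forall>x. x \<bullet> (A *v x) \<ge> 0)"

definition loewner_ge :: "real^'n^'n \<Rightarrow> real^'n^'n \<Rightarrow> bool" where
  "loewner_ge A B \<longleftrightarrow> psd (A - B)"

definition order_stat :: "('n::finite \<Rightarrow> real) \<Rightarrow> nat \<Rightarrow> real" where
  "order_stat f k = sorted_list_of_multiset (image_mset f (mset_set (UNIV :: 'n set))) ! (k - 1)"

end

theory Submission
  imports Defs
begin

text \<open>Fix \<open>k\<close>, let \<open>T\<close> index the \<open>k\<close> smallest diagonal entries of \<open>\<Delta>\<close>, all at most
  the \<open>k\<close>-th smallest one \<open>m\<close>, and let \<open>x\<close> be a unit eigenvector \<open>u\<close> of \<open>\<Sigma>\<close>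
  (eigenvalue \<open>\<lambda>\<close>) with its entries outside \<open>T\<close> set to zero, so that \<open>x \<bullet> u = s\<close>,
  the mass of \<open>u\<close> on \<open>T\<close>. Positive semidefiniteness of \<open>\<Sigma>\<close> at \<open>x - s u\<close> gives
  \<open>\<lambda> s\<^sup>2 \<le> x \<bullet> \<Sigma> x \<le> x \<bullet> \<Delta> x \<le> m s\<close>, hence \<open>\<lambda> s \<le> m\<close>; and \<open>s\<close> is at least the sum
  of the \<open>k\<close> smallest squared entries of \<open>u\<close>.\<close>

lemma order_stat_sorted_enumeration:
  fixes f :: "'n::finite \<Rightarrow> real"
  obtains ixs where "distinct ixs" "set ixs = UNIV" "length ixs = CARD('n)"
    "sorted (map f ixs)"
    "\<And>j. 1 \<le> j \<Longrightarrow> j \<le> CARD('n) \<Longrightarrow> order_stat f j = f (ixs ! (j - 1))"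
proof -
  obtain ns :: "'n list" where ns: "distinct ns" "set ns = UNIV"
    using finite_distinct_list[of "UNIV :: 'n set"] by auto
  define ixs where "ixs = sort_key f ns"
  have distinct: "distinct ixs" and set: "set ixs = UNIV"
    using ns by (simp_all add: ixs_def)
  have length: "length ixs = CARD('n)"
    using distinct set by (metis distinct_card)
  have "image_mset f (mset_set (UNIV :: 'n set)) = mset (map f ns)"
    using ns by (metis mset_map mset_set_set)
  moreover have "sort (map f ns) = map f ixs"
    by (rule properties_for_sort) (simp_all add: ixs_def)
  ultimately have "order_stat f j = f (ixs ! (j - 1))" if "1 \<le> j" "j \<le> CARD('n)" for j
    using that length unfolding order_stat_def by (simp only: sorted_list_of_multiset_mset) simp
  moreover have "sorted (map f ixs)"
    by (simp add: ixs_def)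
  ultimately show ?thesis
    using that distinct set length by blast
qed

lemma sorted_prefix_le_suffix:
  fixes f :: "'a \<Rightarrow> 'b::linorder"
  assumes "sorted (map f xs)" "p \<in> set (take k xs)" "q \<in> set (drop k xs)"
  shows "f p \<le> f q"
  using assms sorted_append[of "map f (take k xs)" "map f (drop k xs)"]
  by (simp flip: map_append)

lemma sum_le_sum_of_card_eq:
  fixes f :: "'a \<Rightarrow> real"
  assumes "finite P" "finite T" "card P = card T"
    and "\<And>p q. p \<in> P - T \<Longrightarrow> q \<in> T - P \<Longrightarrow> f p \<le> f q"
  shows "sum f P \<le> sum f T"
proof -
  have "card (P - T) = card (T - P)"
    using assms(1-3) by (metis card_Diff_subset_Int inf_commute finite_Int)
  then obtain g where g: "bij_betw g (P - T) (T - P)"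
    using finite_same_card_bij assms(1,2) by (metis finite_Diff)
  have "sum f (P - T) \<le> sum (f \<circ> g) (P - T)"
    using g assms(4) by (intro sum_mono) (auto simp: bij_betw_def)
  also have "\<dots> = sum f (T - P)"
    using sum.reindex_bij_betw[OF g] by simp
  finally have "sum f (P - T) \<le> sum f (T - P)" .
  moreover have "sum f P = sum f (P - T) + sum f (P \<inter> T)"
    using assms(1) by (metis add.commute sum.Int_Diff)
  moreover have "sum f T = sum f (T - P) + sum f (P \<inter> T)"
    using assms(2) by (metis add.commute inf_commute sum.Int_Diff)
  ultimately show ?thesis by simp
qed

lemma sum_order_stat_le_sum:
  fixes f :: "'n::finite \<Rightarrow> real"
  assumes "card T = k"
  shows "(\<Sum>j = 1..k. order_stat f j) \<le> sum f T"
proof -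
  obtain ixs where ixs: "distinct ixs" "set ixs = UNIV" "length ixs = CARD('n)"
    "sorted (map f ixs)"
    "\<And>j. 1 \<le> j \<Longrightarrow> j \<le> CARD('n) \<Longrightarrow> order_stat f j = f (ixs ! (j - 1))"
    using order_stat_sorted_enumeration[of f] by blast
  have k: "k \<le> CARD('n)"
    using assms card_mono[of UNIV T] by simp
  define P where "P = set (take k ixs)"
  have "(\<Sum>j = 1..k. order_stat f j) = (\<Sum>a<k. f (ixs ! a))"
    using ixs(5) k
    by (intro sum.reindex_bij_witness[of _ Suc "\<lambda>j. j - 1"]) auto
  also have "\<dots> = sum f P"
  proof -
    have "P = (!) ixs ` {..<k}" and "inj_on ((!) ixs) {..<k}"
      using ixs k by (auto simp: P_def nth_image[symmetric] lessThan_atLeast0 inj_on_def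
          nth_eq_iff_index_eq)
    then show ?thesis by (simp add: sum.reindex)
  qed
  also have "\<dots> \<le> sum f T"
  proof (rule sum_le_sum_of_card_eq)
    show "card P = card T"
      using ixs k assms by (simp add: P_def distinct_card)
    show "f p \<le> f q" if "p \<in> P - T" "q \<in> T - P" for p q
      using that ixs(1,2,4) sorted_prefix_le_suffix[of f ixs p k q]
      by (metis Diff_iff P_def UNIV_I append_take_drop_id set_append Un_iff)
  qed auto
  finally show ?thesis .
qed

lemma order_stat_bounds_smallest_set:
  fixes f :: "'n::finite \<Rightarrow> real"
  assumes "1 \<le> k" "k \<le> CARD('n)"
  obtains T where "card T = k" "T \<noteq> {}" "\<And>i. i \<in> T \<Longrightarrow> f i \<le> order_stat f k"
proof -
  obtain ixs where ixs: "distinct ixs" "length ixs = CARD('n)" "sorted (map f ixs)"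
    "order_stat f k = f (ixs ! (k - 1))"
    using order_stat_sorted_enumeration assms by metis
  define T where "T = set (take k ixs)"
  have "f i \<le> order_stat f k" if "i \<in> T" for i
  proof -
    obtain a where "a < k" "ixs ! a = i"
      using \<open>i \<in> T\<close> assms ixs(2) by (auto simp: T_def in_set_conv_nth)
    then show ?thesis
      using sorted_nth_mono[OF ixs(3), of a "k - 1"] assms ixs(2,4) by simp
  qed
  moreover have "card T = k"
    using ixs assms by (simp add: T_def distinct_card)
  ultimately show ?thesis
    using that assms by fastforce
qed

lemma loewner_ge_quadratic_form:
  assumes "loewner_ge A B"
  shows "x \<bullet> (B *v x) \<le> x \<bullet> (A *v x)"
  using assms unfolding loewner_ge_def psd_def
  by (metis diff_ge_0_iff_ge inner_diff_right matrix_vector_mult_diff_rdistrib)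

lemma loewner_ge_psd:
  assumes "loewner_ge A B" "psd B"
  shows "psd A"
  using assms loewner_ge_quadratic_form order_trans unfolding psd_def by blast

lemma psd_diagonal_nonneg:
  assumes "psd A"
  shows "A $ i $ i \<ge> 0"
  using assms[unfolded psd_def, rule_format, of "axis i 1"]
  by (simp add: matrix_vector_mult_basis inner_axis' column_def)

lemma diagonal_quadratic_form:
  assumes "\<And>i j. i \<noteq> j \<Longrightarrow> D $ i $ j = 0"
  shows "x \<bullet> (D *v x) = (\<Sum>i\<in>UNIV. D $ i $ i * (x $ i)\<^sup>2)"
proof -
  have "(D *v x) $ i = D $ i $ i * x $ i" for i
    unfolding matrix_vector_mult_def
    using sum.mono_neutral_right[of UNIV "{i}" "\<lambda>j. D $ i $ j * x $ j"] assms by auto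
  then show ?thesis
    by (simp add: inner_vec_def power2_eq_square mult_ac)
qed

lemma psd_eigenvector_quadratic_form_ge:
  fixes A :: "real^'n^'n"
  assumes "transpose A = A" "psd A" "A *v v = c *\<^sub>R v" "v \<bullet> v = 1"
  shows "c * (x \<bullet> v)\<^sup>2 \<le> x \<bullet> (A *v x)"
proof -
  define s where "s = x \<bullet> v"
  have "v \<bullet> (A *v x) = (A *v v) \<bullet> x"
    using assms(1) by (metis dot_lmul_matrix transpose_matrix_vector)
  then have "v \<bullet> (A *v x) = c * s"
    using assms(3) by (simp add: s_def inner_commute)
  moreover have "0 \<le> (x - s *\<^sub>R v) \<bullet> (A *v (x - s *\<^sub>R v))"
    using assms(2) unfolding psd_def by blast
  ultimately show ?thesis
    using assms(3,4)
    by (simp add: s_def matrix_vector_mult_diff_distrib matrix_vector_mult_scaleR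
        inner_diff_left inner_diff_right power2_eq_square algebra_simps)
qed

lemma eigenvector_mass_bound:
  fixes \<Sigma> \<Delta> :: "real^'n^'n"
  assumes "transpose \<Sigma> = \<Sigma>" "psd \<Sigma>" "\<Sigma> *v v = c *\<^sub>R v" "v \<bullet> v = 1"
    and "\<And>i j. i \<noteq> j \<Longrightarrow> \<Delta> $ i $ j = 0" "loewner_ge \<Delta> \<Sigma>"
    and "T \<noteq> {}" "\<And>i. i \<in> T \<Longrightarrow> \<Delta> $ i $ i \<le> m"
  shows "c * (\<Sum>i\<in>T. (v $ i)\<^sup>2) \<le> m"
proof -
  define s where "s = (\<Sum>i\<in>T. (v $ i)\<^sup>2)"
  define x :: "real^'n" where "x = (\<chi> i. if i \<in> T then v $ i else 0)"
  have "x \<bullet> v = (\<Sum>i\<in>UNIV. if i \<in> T then (v $ i)\<^sup>2 else 0)"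
    unfolding inner_vec_def x_def by (intro sum.cong) (auto simp: power2_eq_square)
  then have "x \<bullet> v = s"
    by (simp add: sum.If_cases s_def)
  then have "c * s\<^sup>2 \<le> x \<bullet> (\<Sigma> *v x)"
    using psd_eigenvector_quadratic_form_ge[OF assms(1-4)] by metis
  also have "\<dots> \<le> x \<bullet> (\<Delta> *v x)"
    using loewner_ge_quadratic_form[OF assms(6)] .
  also have "\<dots> = (\<Sum>i\<in>UNIV. \<Delta> $ i $ i * (x $ i)\<^sup>2)"
    by (rule diagonal_quadratic_form) (rule assms(5))
  also have "\<dots> = (\<Sum>i\<in>UNIV. if i \<in> T then \<Delta> $ i $ i * (v $ i)\<^sup>2 else 0)"
    by (intro sum.cong) (auto simp: x_def)
  also have "\<dots> = (\<Sum>i\<in>T. \<Delta> $ i $ i * (v $ i)\<^sup>2)"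
    by (simp add: sum.If_cases)
  also have "\<dots> \<le> m * s"
    unfolding s_def sum_distrib_left using assms(8) by (intro sum_mono mult_right_mono) auto
  finally have "c * s * s \<le> m * s"
    by (simp add: power2_eq_square mult_ac)
  moreover have "m \<ge> 0"
    using assms(7,8) psd_diagonal_nonneg[OF loewner_ge_psd[OF assms(6,2)]] by (meson ex_in_conv order_trans)
  moreover have "s \<ge> 0"
    by (simp add: s_def sum_nonneg)
  ultimately show ?thesis
    unfolding s_def[symmetric] by (cases "s = 0") (auto simp: mult_le_cancel_right)
qed

theorem proposition5:
  fixes \<Sigma> \<Delta> :: "real^'n^'n"
    and lam :: "nat \<Rightarrow> real"
    and u :: "nat \<Rightarrow> real^'n"
  assumes sym: "transpose \<Sigma> = \<Sigma>"
    and psd: "psd \<Sigma>"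
    and lam_dec: "\<And>i j. 1 \<le> i \<Longrightarrow> i \<le> j \<Longrightarrow> j \<le> CARD('n) \<Longrightarrow> lam j \<le> lam i"
    and lam_nonneg: "lam (CARD('n)) \<ge> 0"
    and eig: "\<And>l. l \<in> {1..CARD('n)} \<Longrightarrow> \<Sigma> *v u l = lam l *\<^sub>R u l"
    and orthonormal: "\<And>l m. l \<in> {1..CARD('n)} \<Longrightarrow> m \<in> {1..CARD('n)} \<Longrightarrow>
                        u l \<bullet> u m = (if l = m then 1 else 0)"
    and diag: "\<And>i j. i \<noteq> j \<Longrightarrow> \<Delta> $ i $ j = 0"
    and dom: "loewner_ge \<Delta> \<Sigma>"
  shows "\<forall>k \<in> {1..CARD('n)}.
           order_stat (\<lambda>i. \<Delta> $ i $ i) k \<ge>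
           Max ((\<lambda>l. lam l * (\<Sum>j = 1..k. order_stat (\<lambda>i. (u l $ i)^2) j)) ` {1..CARD('n)})"
proof
  fix k assume "k \<in> {1..CARD('n)}"
  then obtain T where T: "card T = k" "T \<noteq> {}"
    "\<And>i. i \<in> T \<Longrightarrow> \<Delta> $ i $ i \<le> order_stat (\<lambda>i. \<Delta> $ i $ i) k"
    using order_stat_bounds_smallest_set[of k "\<lambda>i. \<Delta> $ i $ i"] by auto
  have "lam l * (\<Sum>j = 1..k. order_stat (\<lambda>i. (u l $ i)^2) j) \<le> order_stat (\<lambda>i. \<Delta> $ i $ i) k"
    if l: "l \<in> {1..CARD('n)}" for l
  proof -
    have "lam l \<ge> 0"
      using lam_dec[of l "CARD('n)"] lam_nonneg l by auto
    then have "lam l * (\<Sum>j = 1..k. order_stat (\<lambda>i. (u l $ i)^2) j)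
        \<le> lam l * (\<Sum>i\<in>T. (u l $ i)\<^sup>2)"
      by (rule mult_left_mono[OF sum_order_stat_le_sum[OF T(1)]])
    also have "\<dots> \<le> order_stat (\<lambda>i. \<Delta> $ i $ i) k"
      by (rule eigenvector_mass_bound[OF sym psd eig[OF l]])
        (use orthonormal[OF l l] diag dom T(2,3) in auto)
    finally show ?thesis .
  qed
  then show "Max ((\<lambda>l. lam l * (\<Sum>j = 1..k. order_stat (\<lambda>i. (u l $ i)^2) j)) ` {1..CARD('n)})
      \<le> order_stat (\<lambda>i. \<Delta> $ i $ i) k"
    by (intro Max.boundedI) auto
qed

end
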